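(* Assume the setting of the context and fix $\epsilon_2>0$. Consider any (finite or infinite) sequence of subdivision operations applied to the interval partitions. Then after finitely many subdivisions, $\hat{\mathcal{P}}(\epsilon_2)$ becomes invariant to further subdivision: there is $N$ such that every subdivision after the $N$-th leaves $\hat{\mathcal{P}}(\epsilon_2)$ (as a function of $\theta$) unchanged.
   Context: For $t\in[0,T]$ and trajectory parameters $\theta$, the robot pieces $b_{ij}(t,\theta)\subset\mathbb{R}^3$ and obstacle pieces $o_k\subset\mathbb{R}^3$ are given (finitely many triples $(i,j,k)$); $\text{dist}$ is the shortest Euclidean distance between sets and $d_0\ge0$. $\mathcal{P}$ is a barrier function on $(0,\infty)$, and $\mathcal{P}_{ijk}(t,\theta)=\mathcal{P}(\text{dist}(b_{ij}(t,\theta),o_k)-d_0)$. For each triple $(i,j,k)$ there is a finite partition of $[0,T]$ into closed intervals $[T_0^l,T_1^l]$ (indexed by $l$); a subdivision replaces one interval $[T_0^l,T_1^l]$ of one triple's partition by $[T_0^l,(T_0^l+T_1^l)/2]$ and $[(T_0^l+T_1^l)/2,T_1^l]$. Let $\mathcal{P}_{ijkl}(\theta)=\mathcal{P}_{ijk}((T_0^l+T_1^l)/2,\theta)$. The hybrid penalty is $$\hat{\mathcal{P}}(\epsilon_2)=\sum_{ijkl}\begin{cases}(T_1^l-T_0^l)\mathcal{P}_{ijkl}&T_1^l-T_0^l\ge\epsilon_2\\ \int_{T_0^l}^{T_1^l}\mathcal{P}_{ijk}(t,\theta)\,dt&T_1^l-T_0^l<\epsilon_2,\end{cases}$$ the sum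 running over all triples and all intervals of their current partitions. *)

theory Defs
  imports "HOL-Analysis.Analysis" "HOL-Library.Extended_Nat"
begin

definition Pijk ::
  "(real \<Rightarrow> real) \<Rightarrow> real \<Rightarrow> ('i \<Rightarrow> 'j \<Rightarrow> real \<Rightarrow> 'th \<Rightarrow> (real^3) set)
   \<Rightarrow> ('k \<Rightarrow> (real^3) set) \<Rightarrow> ('i \<times> 'j \<times> 'k) \<Rightarrow> real \<Rightarrow> 'th \<Rightarrow> real" where
  "Pijk P d0 b obs tr t th =
     (case tr of (i, j, k) \<Rightarrow> P (setdist (b i j t th) (obs k) - d0))"

definition interval_partition :: "real \<Rightarrow> (real \<times> real) set \<Rightarrow> bool" where
  "interval_partition T S \<longleftrightarrow>
     finite S \<and> (\<forall>(a, b) \<in> S. a < b) \<and>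
     (\<lambda>(a, b). {a..b}) ` S division_of {0..T}"

definition subdivision ::
  "('t set) \<Rightarrow> ('t \<Rightarrow> (real \<times> real) set) \<Rightarrow> ('t \<Rightarrow> (real \<times> real) set) \<Rightarrow> bool" where
  "subdivision Tr s s' \<longleftrightarrow>
     (\<exists>tr \<in> Tr. \<exists>a b. (a, b) \<in> s tr \<and>
        s' = s(tr := (s tr - {(a, b)}) \<union> {(a, (a + b) / 2), ((a + b) / 2, b)}))"

definition hybrid_penalty ::
  "('t set) \<Rightarrow> ('t \<Rightarrow> real \<Rightarrow> 'th \<Rightarrow> real) \<Rightarrow> real \<Rightarrow> ('t \<Rightarrow> (real \<times> real) set)
   \<Rightarrow> 'th \<Rightarrow> real" where
  "hybrid_penalty Tr Q eps2 s th =
     (\<Sum>tr \<in> Tr. \<Sum>(a, b) \<in> s tr.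
        if b - a \<ge> eps2 then (b - a) * Q tr ((a + b) / 2) th
        else integral {a..b} (\<lambda>t. Q tr t th))"

end

theory Submission
  imports Defs
begin

(* Splitting an interval shorter than eps2 leaves the hybrid penalty unchanged: both halves are
   short again, and the integral is additive over [a, m] and [m, b].  Splitting an interval of
   length l >= eps2 lowers the potential  sum of max 0 (2 l / eps2 - 1)  over all intervals by
   at least 1, and no split raises it.  As the potential is nonnegative, only finitely many
   subdivisions can change the penalty. *)

(* The invariant maintained along the sequence: weaker than interval_partition, but preserved by
   halving, and enough to make the two halves new elements so that sums split exactly. *)
definition interval_packing :: "real \<Rightarrow> (real \<times> real) set \<Rightarrow> bool" where
  "interval_packing T S \<longleftrightarrow>
     finite S \<and> (\<forall>(a, b) \<in> S. 0 \<le> a \<and> a < b \<and> b \<le> T) \<and>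
     pairwise (\<lambda>(a, b) (c, d). b \<le> c \<or> d \<le> a) S"

lemma interval_packingI:
  assumes "finite S"
    and "\<And>a b. (a, b) \<in> S \<Longrightarrow> 0 \<le> a \<and> a < b \<and> b \<le> T"
    and "\<And>a b c d. (a, b) \<in> S \<Longrightarrow> (c, d) \<in> S \<Longrightarrow> (a, b) \<noteq> (c, d) \<Longrightarrow> b \<le> c \<or> d \<le> a"
  shows "interval_packing T S"
  using assms unfolding interval_packing_def pairwise_def by fast

lemma interval_packingD:
  assumes "interval_packing T S"
  shows "finite S"
    and "(a, b) \<in> S \<Longrightarrow> 0 \<le> a \<and> a < b \<and> b \<le> T"
    and "(a, b) \<in> S \<Longrightarrow> (c, d) \<in> S \<Longrightarrow> (a, b) \<noteq> (c, d) \<Longrightarrow> b \<le> c \<or> d \<le> a"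
  using assms unfolding interval_packing_def pairwise_def by fast+

definition split_interval :: "(real \<times> real) set \<Rightarrow> real \<Rightarrow> real \<Rightarrow> (real \<times> real) set" where
  "split_interval S a b = (S - {(a, b)}) \<union> {(a, (a + b) / 2), ((a + b) / 2, b)}"

lemma subdivision_iff_split_interval:
  "subdivision Tr s s' \<longleftrightarrow>
     (\<exists>tr \<in> Tr. \<exists>a b. (a, b) \<in> s tr \<and> s' = s(tr := split_interval (s tr) a b))"
  by (simp add: subdivision_def split_interval_def)

lemma interval_partition_imp_packing:
  assumes "interval_partition T S"
  shows "interval_packing T S"
proof -
  have fin: "finite S" and lt: "\<And>a b. (a, b) \<in> S \<Longrightarrow> a < b"
    and div: "(\<lambda>(a, b). {a..b}) ` S division_of {0..T}"
    using assms by (auto simp: interval_partition_def)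
  show ?thesis
  proof (rule interval_packingI[OF fin])
    fix a b assume ab: "(a, b) \<in> S"
    have "{a..b} \<subseteq> {0..T}"
      using division_ofD(2)[OF div] ab by blast
    then show "0 \<le> a \<and> a < b \<and> b \<le> T"
      using lt[OF ab] by auto
  next
    fix a b c d assume ab: "(a, b) \<in> S" and cd: "(c, d) \<in> S" and ne: "(a, b) \<noteq> (c, d)"
    have "{a..b} \<noteq> {c..d}"
      using lt[OF ab] lt[OF cd] ne by simp
    then have "interior {a..b} \<inter> interior {c..d} = {}"
      using division_ofD(5)[OF div] ab cd by blast
    then have "{a<..<b} \<inter> {c<..<d} = {}"
      by simp
    then show "b \<le> c \<or> d \<le> a"
    proof (rule contrapos_pp)
      assume "\<not> (b \<le> c \<or> d \<le> a)"
      then have "(max a c + min b d) / 2 \<in> {a<..<b} \<inter> {c<..<d}"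
        using lt[OF ab] lt[OF cd] by auto
      then show "{a<..<b} \<inter> {c<..<d} \<noteq> {}"
        by blast
    qed
  qed
qed

lemma interval_packing_split_interval:
  assumes S: "interval_packing T S" and ab: "(a, b) \<in> S"
  shows "interval_packing T (split_interval S a b)"
proof -
  define m where "m = (a + b) / 2"
  have "0 \<le> a" "a < m" "m < b" "b \<le> T"
    using interval_packingD(2)[OF S ab] by (auto simp: m_def)
  have outside: "d \<le> a \<or> b \<le> c" if "(c, d) \<in> S" "(c, d) \<noteq> (a, b)" for c d
    using interval_packingD(3)[OF S] ab that by blast
  show ?thesis
    unfolding split_interval_def m_def[symmetric]
  proof (rule interval_packingI)
    show "finite (S - {(a, b)} \<union> {(a, m), (m, b)})"
      using interval_packingD(1)[OF S] by simp
  next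
    fix c d assume "(c, d) \<in> S - {(a, b)} \<union> {(a, m), (m, b)}"
    then show "0 \<le> c \<and> c < d \<and> d \<le> T"
      using interval_packingD(2)[OF S] \<open>0 \<le> a\<close> \<open>a < m\<close> \<open>m < b\<close> \<open>b \<le> T\<close> by auto
  next
    fix c d c' d'
    assume "(c, d) \<in> S - {(a, b)} \<union> {(a, m), (m, b)}"
      and "(c', d') \<in> S - {(a, b)} \<union> {(a, m), (m, b)}"
      and "(c, d) \<noteq> (c', d')"
    then show "d \<le> c' \<or> d' \<le> c"
      using interval_packingD(3)[OF S, of c d c' d'] outside[of c d] outside[of c' d']
        \<open>a < m\<close> \<open>m < b\<close> by auto
  qed
qed

lemma sum_split_interval:
  fixes f :: "real \<times> real \<Rightarrow> 'a::ab_group_add"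
  assumes S: "interval_packing T S" and ab: "(a, b) \<in> S"
  shows "sum f (split_interval S a b)
           = sum f S - f (a, b) + f (a, (a + b) / 2) + f ((a + b) / 2, b)"
proof -
  define m where "m = (a + b) / 2"
  have "a < m" "m < b"
    using interval_packingD(2)[OF S ab] by (auto simp: m_def)
  moreover have "(a, m) \<notin> S" "(m, b) \<notin> S"
    using interval_packingD(3)[OF S ab] \<open>a < m\<close> \<open>m < b\<close> by fastforce+
  ultimately have "sum f (split_interval S a b) = f (a, m) + (f (m, b) + sum f (S - {(a, b)}))"
    using interval_packingD(1)[OF S] by (simp add: split_interval_def m_def[symmetric])
  also have "sum f (S - {(a, b)}) = sum f S - f (a, b)"
    using interval_packingD(1)[OF S] ab by (simp add: sum_diff1)
  finally show ?thesis
    by (simp add: m_def algebra_simps)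
qed

lemma sum_fun_upd:
  fixes g :: "'a \<Rightarrow> 'b \<Rightarrow> 'c::ab_group_add"
  assumes "finite A" "x \<in> A"
  shows "(\<Sum>y\<in>A. g y ((f(x := v)) y)) = (\<Sum>y\<in>A. g y (f y)) - g x (f x) + g x v"
proof -
  have "(\<Sum>y\<in>A. g y ((f(x := v)) y)) = g x v + (\<Sum>y\<in>A - {x}. g y (f y))"
    using assms by (simp add: sum.remove)
  also have "(\<Sum>y\<in>A - {x}. g y (f y)) = (\<Sum>y\<in>A. g y (f y)) - g x (f x)"
    using assms by (simp add: sum_diff1)
  finally show ?thesis
    by simp
qed

lemma sum_sum_split_interval:
  fixes F :: "'t \<Rightarrow> real \<times> real \<Rightarrow> 'a::ab_group_add"
  assumes "finite Tr" "tr \<in> Tr" "interval_packing T (s tr)" "(a, b) \<in> s tr"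
  shows "(\<Sum>t\<in>Tr. \<Sum>p\<in>(s(tr := split_interval (s tr) a b)) t. F t p)
           = (\<Sum>t\<in>Tr. \<Sum>p\<in>s t. F t p)
              - F tr (a, b) + F tr (a, (a + b) / 2) + F tr ((a + b) / 2, b)"
  using sum_fun_upd[OF assms(1,2), where g = "\<lambda>t A. \<Sum>p\<in>A. F t p"]
    sum_split_interval[OF assms(3,4), of "F tr"] by simp

definition halving_potential :: "real \<Rightarrow> real \<Rightarrow> real" where
  "halving_potential e l = max 0 (2 * l / e - 1)"

lemma halving_potential_halves:
  assumes "e > 0"
  shows "2 * halving_potential e (l / 2) \<le> halving_potential e l - (if e \<le> l then 1 else 0)"
proof (cases "e \<le> l")
  case True
  then have "l / e - 1 \<ge> 0"
    using assms by (simp add: field_simps)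
  then show ?thesis
    using True by (simp add: halving_potential_def)
next
  case False
  then have "l / e - 1 < 0"
    using assms by (simp add: field_simps)
  then show ?thesis
    using False by (simp add: halving_potential_def)
qed

definition partition_potential :: "'t set \<Rightarrow> real \<Rightarrow> ('t \<Rightarrow> (real \<times> real) set) \<Rightarrow> real" where
  "partition_potential Tr e s = (\<Sum>tr\<in>Tr. \<Sum>(a, b)\<in>s tr. halving_potential e (b - a))"

lemma partition_potential_nonneg: "partition_potential Tr e s \<ge> 0"
  unfolding partition_potential_def halving_potential_def
  by (intro sum_nonneg) auto

lemma partition_potential_split_interval:
  assumes "e > 0" "finite Tr" "tr \<in> Tr" "interval_packing T (s tr)" "(a, b) \<in> s tr"
  shows "partition_potential Tr e (s(tr := split_interval (s tr) a b))
           \<le> partition_potential Tr e s - (if e \<le> b - a then 1 else 0)"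
proof -
  have "partition_potential Tr e (s(tr := split_interval (s tr) a b))
          = partition_potential Tr e s - halving_potential e (b - a)
            + 2 * halving_potential e ((b - a) / 2)"
    unfolding partition_potential_def
    using sum_sum_split_interval[where s = s and tr = tr, OF assms(2-5),
        where F = "\<lambda>_ (a, b). halving_potential e (b - a)"]
    by (simp add: field_simps)
  then show ?thesis
    using halving_potential_halves[OF assms(1), of "b - a"] by simp
qed

lemma hybrid_penalty_split_short_interval:
  assumes "finite Tr" "tr \<in> Tr" and S: "interval_packing T (s tr)" and ab: "(a, b) \<in> s tr"
    and short: "b - a < eps2"
    and integrable: "\<And>th. (\<lambda>t. Q tr t th) integrable_on {0..T}"
  shows "hybrid_penalty Tr Q eps2 (s(tr := split_interval (s tr) a b))
           = hybrid_penalty Tr Q eps2 s"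
proof
  fix th
  define m where "m = (a + b) / 2"
  have "0 \<le> a" "a \<le> m" "m \<le> b" "b \<le> T"
    using interval_packingD(2)[OF S ab] by (auto simp: m_def)
  then have "(\<lambda>t. Q tr t th) integrable_on {a..b}"
    by (intro integrable_on_subinterval[OF integrable]) auto
  then have "integral {a..m} (\<lambda>t. Q tr t th) + integral {m..b} (\<lambda>t. Q tr t th)
      = integral {a..b} (\<lambda>t. Q tr t th)"
    by (intro Henstock_Kurzweil_Integration.integral_combine \<open>a \<le> m\<close> \<open>m \<le> b\<close>)
  moreover have "\<not> eps2 \<le> m - a" "\<not> eps2 \<le> b - m"
    using short \<open>a \<le> m\<close> \<open>m \<le> b\<close> by linarith+
  ultimately show "hybrid_penalty Tr Q eps2 (s(tr := split_interval (s tr) a b)) th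
      = hybrid_penalty Tr Q eps2 s th"
    unfolding hybrid_penalty_def
    using sum_sum_split_interval[where s = s and tr = tr, OF assms(1-4), where F = "\<lambda>t (a, b).
        if b - a \<ge> eps2 then (b - a) * Q t ((a + b) / 2) th else integral {a..b} (\<lambda>x. Q t x th)"]
      short by (simp add: m_def)
qed

lemma subdivision_preserves_packing:
  assumes "subdivision Tr s s'" "\<And>tr. tr \<in> Tr \<Longrightarrow> interval_packing T (s tr)" "tr \<in> Tr"
  shows "interval_packing T (s' tr)"
  using assms interval_packing_split_interval
  unfolding subdivision_iff_split_interval by fastforce

lemma subdivision_sequence_packing:
  assumes init: "\<And>tr. tr \<in> Tr \<Longrightarrow> interval_partition T (s 0 tr)"
    and steps: "\<And>n. enat n < L \<Longrightarrow> subdivision Tr (s n) (s (Suc n))"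
    and "enat n \<le> L" "tr \<in> Tr"
  shows "interval_packing T (s n tr)"
  using assms(3,4)
proof (induction n arbitrary: tr)
  case (Suc n)
  then have "enat n < L"
    by (simp add: Suc_ile_eq)
  then show ?case
    using Suc by (intro subdivision_preserves_packing[OF steps]) (auto simp: less_imp_le)
qed (use init interval_partition_imp_packing in blast)

lemma subdivision_potential_descent:
  assumes "finite Tr" "eps2 > 0"
    and integrable: "\<And>tr th. tr \<in> Tr \<Longrightarrow> (\<lambda>t. Q tr t th) integrable_on {0..T}"
    and packing: "\<And>tr. tr \<in> Tr \<Longrightarrow> interval_packing T (s tr)"
    and "subdivision Tr s s'"
  shows "partition_potential Tr eps2 s'
           \<le> partition_potential Tr eps2 s
              - (if hybrid_penalty Tr Q eps2 s' \<noteq> hybrid_penalty Tr Q eps2 s then 1 else 0)"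
proof -
  obtain tr a b where tr: "tr \<in> Tr" and ab: "(a, b) \<in> s tr"
    and s': "s' = s(tr := split_interval (s tr) a b)"
    using \<open>subdivision Tr s s'\<close> unfolding subdivision_iff_split_interval by blast
  have descent: "partition_potential Tr eps2 s'
      \<le> partition_potential Tr eps2 s - (if eps2 \<le> b - a then 1 else 0)"
    unfolding s'
    by (rule partition_potential_split_interval[where s = s and tr = tr,
          OF assms(2,1) tr packing[OF tr] ab])
  show ?thesis
  proof (cases "eps2 \<le> b - a")
    case False
    then have "hybrid_penalty Tr Q eps2 s' = hybrid_penalty Tr Q eps2 s"
      unfolding s'
      by (intro hybrid_penalty_split_short_interval[where s = s and tr = tr,
            OF assms(1) tr packing[OF tr] ab]) (use False integrable[OF tr] in auto)
    then show ?thesis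
      using descent False by simp
  qed (use descent in auto)
qed

lemma finite_unit_descent_steps:
  fixes \<Phi> :: "nat \<Rightarrow> real"
  assumes nonneg: "\<And>n. \<Phi> n \<ge> 0"
    and descent: "\<And>n. enat n < L \<Longrightarrow> \<Phi> (Suc n) \<le> \<Phi> n - (if p n then 1 else 0)"
  shows "finite {n. enat n < L \<and> p n}"
proof -
  define B where "B = {n. enat n < L \<and> p n}"
  have budget: "\<Phi> n + card (B \<inter> {..<n}) \<le> \<Phi> 0" if "enat n \<le> L" for n
    using that
  proof (induction n)
    case (Suc n)
    then have "enat n < L"
      by (simp add: Suc_ile_eq)
    then have "card (B \<inter> {..<Suc n}) = card (B \<inter> {..<n}) + (if p n then 1 else 0)"
      by (auto simp: B_def lessThan_Suc Int_insert_right)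
    then show ?case
      using Suc.IH descent[OF \<open>enat n < L\<close>] \<open>enat n < L\<close>
      by (cases "p n") (simp_all add: less_imp_le)
  qed simp
  show ?thesis
  proof (rule ccontr)
    assume "infinite {n. enat n < L \<and> p n}"
    then obtain C where C: "C \<subseteq> B" "finite C" "card C = Suc (nat \<lceil>\<Phi> 0\<rceil>)"
      using infinite_arbitrarily_large unfolding B_def by blast
    then have "Max C \<in> B"
      using Max_in[of C] by fastforce
    then have "enat (Suc (Max C)) \<le> L"
      by (simp add: B_def Suc_ile_eq)
    moreover have "C \<subseteq> B \<inter> {..<Suc (Max C)}"
      using C by (auto simp: le_imp_less_Suc)
    ultimately have "card C \<le> \<Phi> 0"
      using budget[of "Suc (Max C)"] nonneg[of "Suc (Max C)"] card_mono[of "B \<inter> {..<Suc (Max C)}" C]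
      by fastforce
    then show False
      using C(3) by linarith
  qed
qed

theorem lemma3:
  fixes P :: "real \<Rightarrow> real"
    and d0 T eps2 :: real
    and b :: "'i \<Rightarrow> 'j \<Rightarrow> real \<Rightarrow> 'th \<Rightarrow> (real^3) set"
    and obs :: "'k \<Rightarrow> (real^3) set"
    and Tr :: "('i \<times> 'j \<times> 'k) set"
    and s :: "nat \<Rightarrow> ('i \<times> 'j \<times> 'k) \<Rightarrow> (real \<times> real) set"
    and L :: enat
  assumes "finite Tr"
    and "d0 \<ge> 0"
    and "eps2 > 0"
    and integrable: "\<And>tr th. tr \<in> Tr \<Longrightarrow> (\<lambda>t. Pijk P d0 b obs tr t th) integrable_on {0..T}"
    and init: "\<And>tr. tr \<in> Tr \<Longrightarrow> interval_partition T (s 0 tr)"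
    and steps: "\<And>n. enat n < L \<Longrightarrow> subdivision Tr (s n) (s (Suc n))"
  shows "\<exists>N. \<forall>n. N \<le> n \<and> enat n < L \<longrightarrow>
           hybrid_penalty Tr (Pijk P d0 b obs) eps2 (s (Suc n))
             = hybrid_penalty Tr (Pijk P d0 b obs) eps2 (s n)"
proof -
  let ?hp = "\<lambda>n. hybrid_penalty Tr (Pijk P d0 b obs) eps2 (s n)"
  have "finite {n. enat n < L \<and> ?hp (Suc n) \<noteq> ?hp n}"
  proof (rule finite_unit_descent_steps)
    show "partition_potential Tr eps2 (s (Suc n))
            \<le> partition_potential Tr eps2 (s n) - (if ?hp (Suc n) \<noteq> ?hp n then 1 else 0)"
      if "enat n < L" for n
    proof -
      have "\<And>tr. tr \<in> Tr \<Longrightarrow> interval_packing T (s n tr)"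
        using subdivision_sequence_packing[OF init steps] that by (simp add: less_imp_le)
      from subdivision_potential_descent[OF \<open>finite Tr\<close> \<open>eps2 > 0\<close> integrable this steps[OF that]]
      show ?thesis .
    qed
  qed (rule partition_potential_nonneg)
  then obtain N where "{n. enat n < L \<and> ?hp (Suc n) \<noteq> ?hp n} \<subseteq> {..<N}"
    using finite_nat_bounded by blast
  then show ?thesis
    by (intro exI[of _ N]) auto
qed

end
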